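(* Let $\pi$ be uniform on $\mathrm{PF}_n$ and $f=(f_1,\dots,f_n)$ uniform among all functions $[n]\to[n]$. For all $n\ge4$ and all $1\le k\le n$, $$\sup_{i_1,\dots,i_k\in[n]}\left|P\left(\pi_1\le i_1,\dots,\pi_k\le i_k\right)-P\left(f_1\le i_1,\dots,f_k\le i_k\right)\right|\le 2k\sqrt{\frac{\log n}{n}}+\frac{k(k-1)}{n}.$$
   Context: A parking function of length $n$ is a sequence $(\pi_1,\dots,\pi_n)$ with $1\le\pi_i\le n$ such that $\#\{t:\pi_t\le i\}\ge i$ for all $1\le i\le n$; $\mathrm{PF}_n$ denotes the set of these. $\log$ is the natural logarithm. *)

theory Defs
  imports "HOL-Analysis.Analysis"
begin

definition parking_functions :: "nat \<Rightarrow> (nat \<Rightarrow> nat) set" where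
  "parking_functions n = {p \<in> PiE {1..n} (\<lambda>_. {1..n}).
     \<forall>i\<in>{1..n}. card {t \<in> {1..n}. p t \<le> i} \<ge> i}"

definition all_functions :: "nat \<Rightarrow> (nat \<Rightarrow> nat) set" where
  "all_functions n = PiE {1..n} (\<lambda>_. {1..n})"

definition unif_prob :: "'a set \<Rightarrow> ('a \<Rightarrow> bool) \<Rightarrow> real" where
  "unif_prob S P = real (card {x \<in> S. P x}) / real (card S)"

end

theory Submission
  imports Defs "HOL-Probability.Hoeffding"
begin

text \<open>Pollak's circular argument: adding a common shift \<open>c\<close> modulo \<open>n + 1\<close> to all values is a
  bijection from \<open>PF\<^sub>n \<times> {0..n}\<close> onto the maps \<open>{1..n} \<rightarrow> {0..n}\<close>, and for every shift
  \<open>#{t. \<pi>\<^sub>t \<le> i} - i\<close> is at most the discrepancy of the shifted map on a cyclic interval of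
  length \<open>i\<close>. For a uniform map the largest of these \<open>(n + 1)\<^sup>2\<close> discrepancies has mean at most
  \<open>3/2 (n ln n)\<^sup>1\<^sup>/\<^sup>2\<close> by Hoeffding's exponential bound, so \<open>#{t. \<pi>\<^sub>t \<le> i} / n\<close> is typically
  within \<open>O((ln n / n)\<^sup>1\<^sup>/\<^sup>2)\<close> of \<open>i / n\<close>.

  Since \<open>PF\<^sub>n\<close> is invariant under permuting coordinates, \<open>P(\<pi>\<^sub>1 \<le> i\<^sub>1, \<dots>, \<pi>\<^sub>k \<le> i\<^sub>k)\<close> is the mean
  over injective \<open>\<tau>\<close> of the indicator of \<open>\<pi>\<^bsub>\<tau> 1\<^esub> \<le> i\<^sub>1, \<dots>, \<pi>\<^bsub>\<tau> k\<^esub> \<le> i\<^sub>k\<close>. Admitting all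
  \<open>\<tau> : {1..k} \<rightarrow> {1..n}\<close> costs at most \<open>k(k - 1)/n\<close> and turns this indicator into
  \<open>\<Prod>\<^sub>j #{t. \<pi>\<^sub>t \<le> i\<^sub>j} / n\<close>, which differs from \<open>\<Prod>\<^sub>j i\<^sub>j / n = P(f\<^sub>1 \<le> i\<^sub>1, \<dots>, f\<^sub>k \<le> i\<^sub>k)\<close>
  by at most \<open>k\<close> times the deviation above.\<close>

section \<open>Discrepancy of uniform maps on cyclic intervals\<close>

lemma add_mod_cancel_left_less:
  fixes a b c m :: nat
  assumes "(c + a) mod m = (c + b) mod m" "a < m" "b < m"
  shows "a = b"
proof -
  have "a = b" if "a \<le> b" "(c + a) mod m = (c + b) mod m" "b < m" for a b
  proof -
    have "m dvd b - a" using that mod_eq_dvd_iff_nat[of "c + a" "c + b" m] by simp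
    then show "a = b" using that by (cases "a = b") (auto dest!: dvd_imp_le)
  qed
  then show ?thesis using assms by (metis nat_le_linear)
qed

definition cyclic_interval :: "nat \<Rightarrow> nat \<Rightarrow> nat \<Rightarrow> nat set" where
  "cyclic_interval m a l = (\<lambda>j. (a + j) mod m) ` {0..<l}"

lemma card_cyclic_interval: "l \<le> m \<Longrightarrow> card (cyclic_interval m a l) = l"
  unfolding cyclic_interval_def
  by (subst card_image) (auto intro!: inj_onI dest: add_mod_cancel_left_less)

lemma cyclic_interval_subset: "0 < m \<Longrightarrow> cyclic_interval m a l \<subseteq> {0..<m}"
  unfolding cyclic_interval_def by auto

text \<open>Centred so that its mean over \<open>g \<in> {0..<m}\<^sup>n\<close> is zero.\<close>

definition interval_discrepancy :: "nat \<Rightarrow> nat \<Rightarrow> nat \<Rightarrow> nat \<Rightarrow> (nat \<Rightarrow> nat) \<Rightarrow> real" where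
  "interval_discrepancy m n a l g =
     real (card {t \<in> {1..n}. g t \<in> cyclic_interval m a l}) - real l * real n / real m"

lemma bernoulli_mgf_le:
  fixes p h :: real
  assumes "0 \<le> p" "0 \<le> h"
  shows "p * exp (h * (1 - p)) + (1 - p) * exp (- h * p) \<le> exp (h\<^sup>2 / 8)"
proof -
  have pos: "1 + p * (exp h - 1) > 0"
    using assms by (intro add_pos_nonneg mult_nonneg_nonneg) auto
  have "ln (1 + p * (exp h - 1)) \<le> h\<^sup>2 / 8 + h * p"
    using Hoeffdings_lemma_aux[OF assms(2) assms(1)] by simp
  then have "1 + p * (exp h - 1) \<le> exp (h\<^sup>2 / 8 + h * p)"
    using pos by (metis exp_le_cancel_iff exp_ln)
  then have "exp (- h * p) * (1 + p * (exp h - 1)) \<le> exp (- h * p) * exp (h\<^sup>2 / 8 + h * p)"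
    by (intro mult_left_mono) auto
  also have "\<dots> = exp (h\<^sup>2 / 8)" by (simp add: exp_add[symmetric])
  also have "exp (- h * p) * (1 + p * (exp h - 1)) = p * exp (h * (1 - p)) + (1 - p) * exp (- h * p)"
    by (simp add: algebra_simps exp_diff exp_minus field_simps)
  finally show ?thesis .
qed

lemma sum_exp_centered_indicator:
  fixes h :: real
  assumes m: "0 < m" and S: "S \<subseteq> {0..<m}" "card S = l"
  defines "p \<equiv> real l / real m"
  shows "(\<Sum>v\<in>{0..<m}. exp (h * (of_bool (v \<in> S) - p)))
           = real m * (p * exp (h * (1 - p)) + (1 - p) * exp (- h * p))"
proof -
  have l: "l \<le> m" using S card_mono[of "{0..<m}" S] by auto
  have "(\<Sum>v\<in>{0..<m}. exp (h * (of_bool (v \<in> S) - p)))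
          = (\<Sum>v\<in>S. exp (h * (1 - p))) + (\<Sum>v\<in>{0..<m} - S. exp (- h * p))"
    using S by (subst sum.subset_diff[of S]) (auto intro!: sum.cong)
  also have "\<dots> = real l * exp (h * (1 - p)) + real (m - l) * exp (- h * p)"
    using S by (simp add: card_Diff_subset finite_subset)
  also have "\<dots> = real m * (p * exp (h * (1 - p)) + (1 - p) * exp (- h * p))"
    using m l unfolding p_def by (simp add: field_simps of_nat_diff)
  finally show ?thesis .
qed

text \<open>Hoeffding's bound for the moment generating function of a sum of \<open>n\<close> independent
  indicators, written as a sum over \<open>{0..<m}\<^sup>n\<close>.\<close>

lemma sum_exp_interval_discrepancy_le:
  fixes h :: real
  assumes m: "0 < m" and l: "l \<le> m" and h: "0 \<le> h"
  shows "(\<Sum>g\<in>PiE {1..n} (\<lambda>_. {0..<m}). exp (h * interval_discrepancy m n a l g))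
           \<le> real m ^ n * exp (real n * h\<^sup>2 / 8)"
proof -
  define S where "S = cyclic_interval m a l"
  define p where "p = real l / real m"
  define \<phi> where "\<phi> v = exp (h * (of_bool (v \<in> S) - p))" for v
  have S: "S \<subseteq> {0..<m}" "card S = l"
    unfolding S_def using cyclic_interval_subset[OF m] card_cyclic_interval[OF l] by auto
  have p: "0 \<le> p" "p \<le> 1" using m l unfolding p_def by (auto simp: field_simps)
  have exp_eq_prod: "exp (h * interval_discrepancy m n a l g) = (\<Prod>t\<in>{1..n}. \<phi> (g t))" for g
  proof -
    have "interval_discrepancy m n a l g = (\<Sum>t\<in>{1..n}. of_bool (g t \<in> S) - p)"
      unfolding interval_discrepancy_def S_def p_def by (simp add: sum_subtractf Int_def)
    then show ?thesis unfolding \<phi>_def by (simp add: sum_distrib_left exp_sum)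
  qed
  have "(\<Sum>g\<in>PiE {1..n} (\<lambda>_. {0..<m}). exp (h * interval_discrepancy m n a l g))
          = (\<Prod>t\<in>{1..n}. \<Sum>v\<in>{0..<m}. \<phi> v)"
    unfolding exp_eq_prod by (rule prod_sum_PiE[symmetric]) auto
  also have "\<dots> = (real m * (p * exp (h * (1 - p)) + (1 - p) * exp (- h * p))) ^ n"
    using sum_exp_centered_indicator[OF m S, of h] unfolding \<phi>_def p_def by simp
  also have "\<dots> \<le> (real m * exp (h\<^sup>2 / 8)) ^ n"
    using p h bernoulli_mgf_le[of p h]
    by (intro power_mono mult_left_mono add_nonneg_nonneg mult_nonneg_nonneg) auto
  also have "\<dots> = real m ^ n * exp (real n * h\<^sup>2 / 8)"
    by (simp add: power_mult_distrib exp_of_nat_mult[symmetric])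
  finally show ?thesis .
qed

lemma card_mult_exp_mean_le_sum_exp:
  fixes y :: "'a \<Rightarrow> real"
  assumes G: "finite G" "G \<noteq> {}"
  shows "real (card G) * exp ((\<Sum>g\<in>G. y g) / real (card G)) \<le> (\<Sum>g\<in>G. exp (y g))"
proof -
  define c where "c = (\<Sum>g\<in>G. y g) / real (card G)"
  have "exp c * (1 + (y g - c)) \<le> exp (y g)" for g
    using exp_ge_add_one_self[of "y g - c"] by (simp add: exp_diff field_simps)
  then have "(\<Sum>g\<in>G. exp c * (1 + (y g - c))) \<le> (\<Sum>g\<in>G. exp (y g))"
    by (intro sum_mono)
  moreover have "(\<Sum>g\<in>G. exp c * (1 + (y g - c))) = real (card G) * exp c"
    using G by (simp add: c_def sum_distrib_left[symmetric] sum.distrib sum_subtractf)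
  ultimately show ?thesis unfolding c_def by simp
qed

lemma mean_Max_le:
  fixes F :: "'j \<Rightarrow> 'a \<Rightarrow> real"
  assumes G: "finite G" "G \<noteq> {}" and J: "finite J" "J \<noteq> {}" and h: "h > 0" and B: "B > 0"
    and mgf: "\<And>x. x \<in> J \<Longrightarrow> (\<Sum>g\<in>G. exp (h * F x g)) \<le> real (card G) * B"
  shows "(\<Sum>g\<in>G. Max ((\<lambda>x. F x g) ` J)) / real (card G) \<le> (ln (real (card J)) + ln B) / h"
proof -
  define H where "H g = Max ((\<lambda>x. F x g) ` J)" for g
  have cG: "real (card G) > 0" and cJ: "real (card J) > 0" using G J by auto
  have exp_Max: "exp (h * H g) \<le> (\<Sum>x\<in>J. exp (h * F x g))" for g
  proof -
    have "H g \<in> (\<lambda>x. F x g) ` J" unfolding H_def using J by (intro Max_in) auto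
    then obtain x where "x \<in> J" "H g = F x g" by auto
    then show ?thesis using J by (auto intro!: member_le_sum)
  qed
  have "real (card G) * exp ((\<Sum>g\<in>G. h * H g) / real (card G)) \<le> (\<Sum>g\<in>G. exp (h * H g))"
    by (rule card_mult_exp_mean_le_sum_exp[OF G])
  also have "\<dots> \<le> (\<Sum>g\<in>G. \<Sum>x\<in>J. exp (h * F x g))"
    using exp_Max by (intro sum_mono)
  also have "\<dots> = (\<Sum>x\<in>J. \<Sum>g\<in>G. exp (h * F x g))" by (rule sum.swap)
  also have "\<dots> \<le> (\<Sum>x\<in>J. real (card G) * B)" using mgf by (intro sum_mono)
  also have "\<dots> = real (card G) * (real (card J) * B)" by simp
  finally have "exp ((\<Sum>g\<in>G. h * H g) / real (card G)) \<le> real (card J) * B"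
    using cG by simp
  then have "(\<Sum>g\<in>G. h * H g) / real (card G) \<le> ln (real (card J) * B)"
    using cJ B by (metis exp_le_cancel_iff exp_ln mult_pos_pos)
  also have "\<dots> = ln (real (card J)) + ln B" using cJ B by (simp add: ln_mult)
  finally have "h * ((\<Sum>g\<in>G. H g) / real (card G)) \<le> ln (real (card J)) + ln B"
    by (simp add: sum_distrib_left[symmetric])
  then show ?thesis unfolding H_def using h by (simp add: field_simps)
qed

definition max_interval_discrepancy :: "nat \<Rightarrow> (nat \<Rightarrow> nat) \<Rightarrow> real" where
  "max_interval_discrepancy n g =
     Max ((\<lambda>(a, l). interval_discrepancy (Suc n) n a l g) ` ({0..<Suc n} \<times> {0..n}))"

lemma interval_discrepancy_le_max:
  "a < Suc n \<Longrightarrow> l \<le> n \<Longrightarrow> interval_discrepancy (Suc n) n a l g \<le> max_interval_discrepancy n g"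
  unfolding max_interval_discrepancy_def by (intro Max_ge) (auto intro!: image_eqI[where x="(a, l)"])

lemma ln_Suc_squared_le:
  assumes "n \<ge> 2"
  shows "ln (real (Suc n * Suc n)) \<le> 4 * ln (real n)"
proof -
  have "Suc n \<le> n * n" using assms mult_le_mono1[of 2 n n] by linarith
  then have "real (Suc n * Suc n) \<le> (real n ^ 2) ^ 2"
    by (metis of_nat_le_iff of_nat_mult of_nat_power power2_eq_square mult_le_mono)
  moreover have "0 < real (Suc n * Suc n)" by (simp only: of_nat_0_less_iff) simp
  ultimately have "ln (real (Suc n * Suc n)) \<le> ln ((real n ^ 2) ^ 2)"
    by (meson ln_mono)
  also have "\<dots> = 4 * ln (real n)" using assms by (simp add: ln_realpow)
  finally show ?thesis .
qed

text \<open>Optimising the exponential-moment bound with \<open>h = 4 (ln n / n)\<^sup>1\<^sup>/\<^sup>2\<close>.\<close>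

lemma mean_max_interval_discrepancy_le:
  assumes n: "n \<ge> 2"
  defines "G \<equiv> PiE {1..n} (\<lambda>_. {0..<Suc n})"
  shows "(\<Sum>g\<in>G. max_interval_discrepancy n g) / real (card G) \<le> 3/2 * sqrt (real n * ln (real n))"
proof -
  define J where "J = {0..<Suc n} \<times> {0..n}"
  define s where "s = sqrt (ln (real n) / real n)"
  define h where "h = 4 * s"
  define B where "B = exp (real n * h\<^sup>2 / 8)"
  have lnpos: "ln (real n) > 0" using n by simp
  have s: "s > 0" "s\<^sup>2 = ln (real n) / real n" unfolding s_def using n lnpos by simp_all
  have G: "finite G" "G \<noteq> {}" and cG: "card G = Suc n ^ n"
    unfolding G_def by (auto simp: PiE_eq_empty_iff card_PiE intro!: finite_PiE)
  have J: "finite J" "J \<noteq> {}" unfolding J_def by auto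
  have mgf: "(\<Sum>g\<in>G. exp (h * (\<lambda>(a, l). interval_discrepancy (Suc n) n a l g) x)) \<le> real (card G) * B"
    if "x \<in> J" for x
    using sum_exp_interval_discrepancy_le[of "Suc n" "snd x" h n "fst x"] that s
    unfolding G_def J_def B_def h_def by (auto simp: card_PiE split: prod.splits)
  have "(\<Sum>g\<in>G. max_interval_discrepancy n g) / real (card G) \<le> (ln (real (card J)) + ln B) / h"
    unfolding max_interval_discrepancy_def J_def[symmetric]
    by (rule mean_Max_le[OF G J]) (use s mgf in \<open>auto simp: h_def B_def\<close>)
  also have "\<dots> \<le> 6 * ln (real n) / h"
  proof -
    have "ln B = 2 * ln (real n)"
      unfolding B_def h_def using s n by (simp add: power_mult_distrib field_simps)
    moreover have "ln (real (card J)) \<le> 4 * ln (real n)"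
      using ln_Suc_squared_le[OF n] unfolding J_def by (simp add: card_cartesian_product)
    ultimately show ?thesis using s unfolding h_def by (intro divide_right_mono) auto
  qed
  also have "\<dots> = 3/2 * sqrt (real n * ln (real n))"
  proof -
    have "sqrt (real n * ln (real n)) = real n * s"
      unfolding s_def using n lnpos by (simp add: real_sqrt_mult real_sqrt_divide field_simps)
    moreover have "ln (real n) = real n * s\<^sup>2" using s n by simp
    ultimately show ?thesis using s unfolding h_def by (simp add: power2_eq_square)
  qed
  finally show ?thesis .
qed

section \<open>Pollak's bijection\<close>

lemma parking_function_value: "p \<in> parking_functions n \<Longrightarrow> t \<in> {1..n} \<Longrightarrow> p t \<in> {1..n}"
  unfolding parking_functions_def by (auto simp: PiE_iff)

lemma parking_function_extensional: "p \<in> parking_functions n \<Longrightarrow> p \<in> extensional {1..n}"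
  unfolding parking_functions_def by (auto simp: PiE_iff)

lemma parking_function_count_ge:
  "p \<in> parking_functions n \<Longrightarrow> i \<in> {1..n} \<Longrightarrow> i \<le> card {t \<in> {1..n}. p t \<le> i}"
  unfolding parking_functions_def by auto

lemma finite_parking_functions: "finite (parking_functions n)"
  unfolding parking_functions_def
  by (rule finite_subset[OF _ finite_PiE[of "{1..n}" "\<lambda>_. {1..n}"]]) auto

definition cyclic_shift :: "nat \<Rightarrow> (nat \<Rightarrow> nat) \<Rightarrow> nat \<Rightarrow> (nat \<Rightarrow> nat)" where
  "cyclic_shift n p c = restrict (\<lambda>t. (p t + c) mod Suc n) {1..n}"

lemma cyclic_shift_in_PiE: "cyclic_shift n p c \<in> PiE {1..n} (\<lambda>_. {0..<Suc n})"
  unfolding cyclic_shift_def by (auto simp: PiE_iff)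

text \<open>With \<open>d = c' - c\<close>, an index \<open>t\<close> with \<open>p t \<le> d\<close> and \<open>q t \<le> n + 1 - d\<close> would give
  \<open>p t \<equiv> q t + d\<close> modulo \<open>n + 1\<close>, which is impossible; but parking supplies at least \<open>d\<close> indices
  of the first kind and \<open>n + 1 - d\<close> of the second.\<close>

lemma cyclic_shifts_differ:
  assumes p: "p \<in> parking_functions n" and q: "q \<in> parking_functions n"
    and cc': "c < c'" "c' < Suc n"
  shows "\<exists>t\<in>{1..n}. (p t + c) mod Suc n \<noteq> (q t + c') mod Suc n"
proof (rule ccontr)
  assume "\<not> ?thesis"
  then have eq: "(p t + c) mod Suc n = (q t + c') mod Suc n" if "t \<in> {1..n}" for t
    using that by blast
  define d where "d = c' - c"
  define m where "m = Suc n"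
  have d: "1 \<le> d" "d \<le> n" using cc' unfolding d_def by auto
  define S where "S = {t \<in> {1..n}. p t \<le> d}"
  define T where "T = {t \<in> {1..n}. q t \<le> m - d}"
  have card_S: "d \<le> card S" unfolding S_def using parking_function_count_ge[OF p, of d] d by auto
  have "m - d \<in> {1..n}" using d unfolding m_def by auto
  from parking_function_count_ge[OF q this] have card_T: "m - d \<le> card T" unfolding T_def .
  have "S \<inter> T = {}"
  proof (rule ccontr)
    assume "S \<inter> T \<noteq> {}"
    then obtain t where t: "t \<in> {1..n}" "p t \<le> d" "q t \<le> m - d" unfolding S_def T_def by auto
    have pt: "1 \<le> p t" "p t \<le> n" and qt: "1 \<le> q t"
      using parking_function_value[OF p t(1)] parking_function_value[OF q t(1)] by auto
    have shifted: "(c + p t) mod m = (c + (q t + d)) mod m"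
      using eq[OF t(1)] cc' unfolding d_def m_def by (simp add: add.commute add.left_commute)
    show False
    proof (cases "q t + d < m")
      case True
      then have "p t = q t + d"
        using add_mod_cancel_left_less[OF shifted] pt unfolding m_def by simp
      then show False using t qt by auto
    next
      case False
      moreover have "q t + d \<le> m" using t(3) d(2) unfolding m_def by (simp add: le_diff_conv2)
      ultimately have qd: "q t + d = m" by simp
      have "(c + p t) mod m = (c + 0) mod m" using shifted unfolding qd by simp
      then have "p t = 0" using add_mod_cancel_left_less[of c "p t" m 0] pt unfolding m_def by simp
      then show False using pt by simp
    qed
  qed
  then have "card S + card T = card (S \<union> T)"
    unfolding S_def T_def by (simp add: card_Un_disjoint)
  also have "\<dots> \<le> card {1..n}" unfolding S_def T_def by (intro card_mono) auto
  finally show False using card_S card_T d unfolding m_def by simp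
qed

lemma inj_on_cyclic_shift:
  "inj_on (\<lambda>(p, c). cyclic_shift n p c) (parking_functions n \<times> {0..<Suc n})"
proof (rule inj_onI, clarsimp)
  fix p q c c'
  assume p: "p \<in> parking_functions n" and q: "q \<in> parking_functions n"
    and c: "c < Suc n" "c' < Suc n" and e: "cyclic_shift n p c = cyclic_shift n q c'"
  have eq: "(p t + c) mod Suc n = (q t + c') mod Suc n" if "t \<in> {1..n}" for t
    using fun_cong[OF e, of t] that unfolding cyclic_shift_def by simp
  have "c = c'"
  proof (rule ccontr)
    assume "c \<noteq> c'"
    then consider "c < c'" | "c' < c" by linarith
    then show False
    proof cases
      case 1
      then show False using cyclic_shifts_differ[OF p q 1 c(2)] eq by blast
    next
      case 2
      then show False using cyclic_shifts_differ[OF q p 2 c(1)] eq by (metis (no_types))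
    qed
  qed
  have "p t = q t" if t: "t \<in> {1..n}" for t
  proof (rule add_mod_cancel_left_less)
    show "(c + p t) mod Suc n = (c + q t) mod Suc n"
      using eq[OF t] \<open>c = c'\<close> by (simp only: add.commute)
    show "p t < Suc n" "q t < Suc n"
      using parking_function_value[OF p t] parking_function_value[OF q t] by auto
  qed
  then have "p = q"
    using parking_function_extensional[OF p] parking_function_extensional[OF q]
    by (intro extensionalityI) auto
  with \<open>c = c'\<close> show "p = q \<and> c = c'" by simp
qed

definition cyclic_unshift :: "nat \<Rightarrow> (nat \<Rightarrow> nat) \<Rightarrow> nat \<Rightarrow> (nat \<Rightarrow> nat)" where
  "cyclic_unshift n g c = restrict (\<lambda>t. if c < g t then g t - c else g t + Suc n - c) {1..n}"

lemma cyclic_shift_unshift: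
  assumes g: "g \<in> PiE {1..n} (\<lambda>_. {0..<Suc n})" and c: "c < Suc n"
  shows "cyclic_shift n (cyclic_unshift n g c) c = g"
proof (rule extensionalityI)
  show "cyclic_shift n (cyclic_unshift n g c) c \<in> extensional {1..n}"
    unfolding cyclic_shift_def by simp
  show "g \<in> extensional {1..n}" using g by (auto simp: PiE_iff)
  fix t assume t: "t \<in> {1..n}"
  then have gt: "g t < Suc n" using g by (auto simp: PiE_iff)
  show "cyclic_shift n (cyclic_unshift n g c) c t = g t"
  proof (cases "c < g t")
    case True
    then show ?thesis using t gt unfolding cyclic_shift_def cyclic_unshift_def by simp
  next
    case False
    have "g t + Suc n - c + c = g t + Suc n" using c by simp
    then have "(g t + Suc n - c + c) mod Suc n = g t" using gt by (simp only: mod_add_self2) simp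
    then show ?thesis using t False unfolding cyclic_shift_def cyclic_unshift_def by simp
  qed
qed

text \<open>Pollak's cycle lemma: the walk \<open>x \<mapsto> #{t. g t < x} - x\<close> of \<open>g \<in> {0..n}\<^sup>n\<close> ends at \<open>-1\<close>
  for \<open>x = n + 1\<close>, and unshifting \<open>g\<close> by \<open>e - 1\<close>, where \<open>e\<close> is the first minimum of the walk on
  \<open>{1..n+1}\<close>, yields a parking function.\<close>

definition cycle_walk :: "nat \<Rightarrow> (nat \<Rightarrow> nat) \<Rightarrow> nat \<Rightarrow> int" where
  "cycle_walk n g x = int (card {t \<in> {1..n}. g t < x}) - int x"

context
  fixes n e :: nat and g :: "nat \<Rightarrow> nat"
  assumes g: "g \<in> PiE {1..n} (\<lambda>_. {0..<Suc n})"
    and e: "e \<in> {1..Suc n}"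
    and walk_min: "\<And>y. y \<in> {1..Suc n} \<Longrightarrow> cycle_walk n g e \<le> cycle_walk n g y"
    and walk_first_min: "\<And>y. y \<in> {1..Suc n} \<Longrightarrow> y < e \<Longrightarrow> cycle_walk n g e < cycle_walk n g y"
begin

lemma value_less_Suc: "t \<in> {1..n} \<Longrightarrow> g t < Suc n"
  using g by (auto simp: PiE_iff)

lemma first_min_pred_not_value:
  assumes t: "t \<in> {1..n}"
  shows "g t \<noteq> e - 1"
proof
  assume gt: "g t = e - 1"
  have "t \<in> {t \<in> {1..n}. g t < e} - {t \<in> {1..n}. g t < e - 1}"
    using t gt e by auto
  then have "{t \<in> {1..n}. g t < e - 1} \<subset> {t \<in> {1..n}. g t < e}" by auto
  then have less: "card {t \<in> {1..n}. g t < e - 1} < card {t \<in> {1..n}. g t < e}"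
    by (intro psubset_card_mono) auto
  show False
  proof (cases "e = 1")
    case True
    then have "cycle_walk n g e \<ge> 0" using less unfolding cycle_walk_def by simp
    moreover have "{t \<in> {1..n}. g t < Suc n} = {1..n}" using value_less_Suc by auto
    then have "cycle_walk n g (Suc n) = -1" unfolding cycle_walk_def by simp
    ultimately show False using walk_min[of "Suc n"] by auto
  next
    case False
    then have "cycle_walk n g e < cycle_walk n g (e - 1)" using e by (intro walk_first_min) auto
    then show False using less e unfolding cycle_walk_def by (simp add: of_nat_diff)
  qed
qed

lemma cyclic_unshift_first_min_value:
  "t \<in> {1..n} \<Longrightarrow> cyclic_unshift n g (e - 1) t \<in> {1..n}"
  using value_less_Suc[of t] first_min_pred_not_value[of t] e unfolding cyclic_unshift_def by auto

lemma cyclic_unshift_first_min_count_no_wrap: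
  assumes i: "i \<in> {1..n}" and no_wrap: "e + i \<le> Suc n"
  shows "i \<le> card {t \<in> {1..n}. cyclic_unshift n g (e - 1) t \<le> i}"
proof -
  define N where "N x = card {t \<in> {1..n}. g t < x}" for x
  have "int (N e) - int e \<le> int (N (e + i)) - int (e + i)"
    using walk_min[of "e + i"] no_wrap i unfolding cycle_walk_def N_def by auto
  then have "i \<le> N (e + i) - N e" by linarith
  also have "\<dots> = card ({t \<in> {1..n}. g t < e + i} - {t \<in> {1..n}. g t < e})"
    unfolding N_def by (subst card_Diff_subset) auto
  also have "\<dots> \<le> card {t \<in> {1..n}. cyclic_unshift n g (e - 1) t \<le> i}"
    using e unfolding cyclic_unshift_def by (intro card_mono) auto
  finally show ?thesis .
qed

lemma cyclic_unshift_first_min_count_wrap: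
  assumes i: "i \<in> {1..n}" and wrap: "Suc n < e + i"
  shows "i \<le> card {t \<in> {1..n}. cyclic_unshift n g (e - 1) t \<le> i}"
proof -
  define N where "N x = card {t \<in> {1..n}. g t < x}" for x
  define y where "y = e + i - Suc n"
  have y: "y \<in> {1..Suc n}" "y < e" using wrap i e unfolding y_def by auto
  have "N e \<le> card {1..n}" unfolding N_def by (rule card_mono) auto
  moreover have "int (N e) - int e < int (N y) - int y"
    using walk_first_min[OF y] unfolding cycle_walk_def N_def .
  moreover have "int y = int e + int i - int (Suc n)" using wrap unfolding y_def by auto
  ultimately have "i \<le> (n - N e) + N y" by simp
  also have "\<dots> = card (({1..n} - {t \<in> {1..n}. g t < e}) \<union> {t \<in> {1..n}. g t < y})"
  proof -
    have "card ({1..n} - {t \<in> {1..n}. g t < e}) = n - N e"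
      unfolding N_def by (subst card_Diff_subset) auto
    then show ?thesis using y unfolding N_def by (subst card_Un_disjoint) auto
  qed
  also have "\<dots> \<le> card {t \<in> {1..n}. cyclic_unshift n g (e - 1) t \<le> i}"
  proof (rule card_mono)
    show "({1..n} - {t \<in> {1..n}. g t < e}) \<union> {t \<in> {1..n}. g t < y}
            \<subseteq> {t \<in> {1..n}. cyclic_unshift n g (e - 1) t \<le> i}"
    proof
      fix t assume "t \<in> ({1..n} - {t \<in> {1..n}. g t < e}) \<union> {t \<in> {1..n}. g t < y}"
      then consider "t \<in> {1..n}" "e \<le> g t" | "t \<in> {1..n}" "g t < y" by auto
      then show "t \<in> {t \<in> {1..n}. cyclic_unshift n g (e - 1) t \<le> i}"
      proof cases
        case 1
        then show ?thesis using value_less_Suc[OF 1(1)] wrap e unfolding cyclic_unshift_def by auto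
      next
        case 2
        then show ?thesis using y i e wrap unfolding cyclic_unshift_def y_def by auto
      qed
    qed
  qed auto
  finally show ?thesis .
qed

lemma cyclic_unshift_first_min_parking: "cyclic_unshift n g (e - 1) \<in> parking_functions n"
proof -
  have "i \<le> card {t \<in> {1..n}. cyclic_unshift n g (e - 1) t \<le> i}" if "i \<in> {1..n}" for i
  proof (cases "e + i \<le> Suc n")
    case True
    then show ?thesis by (rule cyclic_unshift_first_min_count_no_wrap[OF that])
  next
    case False
    then show ?thesis by (intro cyclic_unshift_first_min_count_wrap[OF that]) simp
  qed
  then show ?thesis
    unfolding parking_functions_def using cyclic_unshift_first_min_value
    by (auto simp: PiE_iff cyclic_unshift_def)
qed

end

lemma cyclic_shift_surj:
  assumes g: "g \<in> PiE {1..n} (\<lambda>_. {0..<Suc n})"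
  shows "\<exists>p\<in>parking_functions n. \<exists>c<Suc n. cyclic_shift n p c = g"
proof -
  define W where "W = cycle_walk n g"
  define M where "M = Min (W ` {1..Suc n})"
  define e where "e = (LEAST y. y \<in> {1..Suc n} \<and> W y = M)"
  have "M \<in> W ` {1..Suc n}" unfolding M_def by (intro Min_in) auto
  then have "\<exists>y. y \<in> {1..Suc n} \<and> W y = M" by auto
  then have e: "e \<in> {1..Suc n}" "W e = M" unfolding e_def by (metis (mono_tags, lifting) LeastI_ex)+
  have min: "W e \<le> W y" if "y \<in> {1..Suc n}" for y
    unfolding \<open>W e = M\<close> M_def using that by (intro Min_le) auto
  have first_min: "W e < W y" if "y \<in> {1..Suc n}" "y < e" for y
    using min[OF that(1)] not_less_Least[OF that(2)[unfolded e_def]] that(1) \<open>W e = M\<close>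
    by fastforce
  have "cyclic_unshift n g (e - 1) \<in> parking_functions n"
    using g e(1) min first_min unfolding W_def by (rule cyclic_unshift_first_min_parking)
  moreover have "cyclic_shift n (cyclic_unshift n g (e - 1)) (e - 1) = g"
    using e(1) by (intro cyclic_shift_unshift[OF g]) auto
  moreover have "e - 1 < Suc n" using e(1) by auto
  ultimately show ?thesis by blast
qed

lemma bij_betw_cyclic_shift:
  "bij_betw (\<lambda>(p, c). cyclic_shift n p c) (parking_functions n \<times> {0..<Suc n})
     (PiE {1..n} (\<lambda>_. {0..<Suc n}))"
proof (rule bij_betw_imageI[OF inj_on_cyclic_shift], rule subset_antisym)
  show "(\<lambda>(p, c). cyclic_shift n p c) ` (parking_functions n \<times> {0..<Suc n})
          \<subseteq> PiE {1..n} (\<lambda>_. {0..<Suc n})"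
    by (rule image_subsetI) (simp only: case_prod_beta cyclic_shift_in_PiE)
  show "PiE {1..n} (\<lambda>_. {0..<Suc n})
          \<subseteq> (\<lambda>(p, c). cyclic_shift n p c) ` (parking_functions n \<times> {0..<Suc n})"
  proof
    fix g assume "g \<in> PiE {1..n} (\<lambda>_. {0..<Suc n})"
    then obtain p c where "p \<in> parking_functions n" "c < Suc n" "cyclic_shift n p c = g"
      using cyclic_shift_surj by blast
    then show "g \<in> (\<lambda>(p, c). cyclic_shift n p c) ` (parking_functions n \<times> {0..<Suc n})"
      by (intro image_eqI[where x="(p, c)"]) auto
  qed
qed

lemma card_parking_functions: "card (parking_functions n) * Suc n = Suc n ^ n"
  using bij_betw_same_card[OF bij_betw_cyclic_shift[of n]]
  by (simp add: card_cartesian_product card_PiE)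

lemma parking_functions_nonempty: "parking_functions n \<noteq> {}"
  using card_parking_functions[of n] by auto

section \<open>Deviation of the counts of a parking function\<close>

lemma cyclic_interval_mod: "cyclic_interval m (a mod m) l = cyclic_interval m a l"
  unfolding cyclic_interval_def by (simp add: mod_add_left_eq)

lemma shift_in_cyclic_interval_iff:
  assumes x: "1 \<le> x" "x \<le> n" and i: "i \<le> n"
  shows "(x + c) mod Suc n \<in> cyclic_interval (Suc n) (c + 1) i \<longleftrightarrow> x \<le> i"
proof -
  have "(x + c) mod Suc n \<in> cyclic_interval (Suc n) (c + 1) i
          \<longleftrightarrow> (\<exists>j<i. (c + x) mod Suc n = (c + (1 + j)) mod Suc n)"
    unfolding cyclic_interval_def by (auto simp: ac_simps)
  also have "\<dots> \<longleftrightarrow> (\<exists>j<i. x = 1 + j)"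
  proof -
    have "(c + x) mod Suc n = (c + (1 + j)) mod Suc n \<longleftrightarrow> x = 1 + j" if "j < i" for j
      using add_mod_cancel_left_less[of c x "Suc n" "1 + j"] that x i by auto
    then show ?thesis by auto
  qed
  also have "\<dots> \<longleftrightarrow> x \<le> i"
    using x by (auto intro: exI[where x="x - 1"])
  finally show ?thesis .
qed

text \<open>The shift by \<open>c\<close> sends exactly the values \<open>p t \<le> i\<close> into the cyclic interval of length \<open>i\<close>
  starting at \<open>c + 1\<close>; the centring \<open>i n / (n + 1) \<le> i\<close> only helps.\<close>

lemma parking_excess_le_max_interval_discrepancy:
  assumes p: "p \<in> parking_functions n" and i: "i \<in> {1..n}"
  shows "real (card {t \<in> {1..n}. p t \<le> i}) - real i \<le> max_interval_discrepancy n (cyclic_shift n p c)"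
proof -
  define a where "a = (c + 1) mod Suc n"
  have "{t \<in> {1..n}. cyclic_shift n p c t \<in> cyclic_interval (Suc n) a i} = {t \<in> {1..n}. p t \<le> i}"
    using parking_function_value[OF p] shift_in_cyclic_interval_iff i
    unfolding a_def cyclic_interval_mod cyclic_shift_def by auto
  then have "real (card {t \<in> {1..n}. p t \<le> i}) - real i \<le> interval_discrepancy (Suc n) n a i (cyclic_shift n p c)"
    unfolding interval_discrepancy_def using i by (simp add: field_simps)
  also have "\<dots> \<le> max_interval_discrepancy n (cyclic_shift n p c)"
    using i unfolding a_def by (intro interval_discrepancy_le_max) auto
  finally show ?thesis .
qed

definition shift_discrepancy :: "nat \<Rightarrow> (nat \<Rightarrow> nat) \<Rightarrow> real" where
  "shift_discrepancy n p = (\<Sum>c<Suc n. max_interval_discrepancy n (cyclic_shift n p c)) / real (Suc n)"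

lemma parking_excess_le_shift_discrepancy:
  assumes "p \<in> parking_functions n" and "i \<in> {1..n}"
  shows "real (card {t \<in> {1..n}. p t \<le> i}) - real i \<le> shift_discrepancy n p"
proof -
  have "(\<Sum>c<Suc n. real (card {t \<in> {1..n}. p t \<le> i}) - real i)
          \<le> (\<Sum>c<Suc n. max_interval_discrepancy n (cyclic_shift n p c))"
    using parking_excess_le_max_interval_discrepancy[OF assms] by (intro sum_mono)
  then show ?thesis unfolding shift_discrepancy_def by (simp add: field_simps)
qed

lemma mean_shift_discrepancy_le:
  assumes "n \<ge> 2"
  shows "(\<Sum>p\<in>parking_functions n. shift_discrepancy n p) / real (card (parking_functions n))
           \<le> 3/2 * sqrt (real n * ln (real n))"
proof -
  define PF where "PF = parking_functions n"
  define G where "G = PiE {1..n} (\<lambda>_. {0..<Suc n})"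
  have "(\<Sum>p\<in>PF. \<Sum>c<Suc n. max_interval_discrepancy n (cyclic_shift n p c))
          = (\<Sum>(p, c)\<in>PF \<times> {0..<Suc n}. max_interval_discrepancy n (cyclic_shift n p c))"
    by (simp only: lessThan_atLeast0 sum.cartesian_product)
  also have "\<dots> = (\<Sum>g\<in>G. max_interval_discrepancy n g)"
    unfolding PF_def G_def
    using sum.reindex_bij_betw[OF bij_betw_cyclic_shift, of "max_interval_discrepancy n"]
    by (simp add: case_prod_beta')
  finally have "(\<Sum>p\<in>PF. shift_discrepancy n p) = (\<Sum>g\<in>G. max_interval_discrepancy n g) / real (Suc n)"
    unfolding shift_discrepancy_def by (simp add: sum_divide_distrib[symmetric])
  moreover have "card G = card PF * Suc n"
    using card_parking_functions[of n] unfolding G_def PF_def by (simp add: card_PiE)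
  then have "real (card G) = real (card PF) * real (Suc n)" by (simp only: of_nat_mult)
  ultimately have "(\<Sum>p\<in>PF. shift_discrepancy n p) / real (card PF)
                     = (\<Sum>g\<in>G. max_interval_discrepancy n g) / real (card G)"
    by simp
  also have "\<dots> \<le> 3/2 * sqrt (real n * ln (real n))"
    unfolding G_def by (rule mean_max_interval_discrepancy_le[OF assms])
  finally show ?thesis unfolding PF_def .
qed

section \<open>Exchangeability and comparison with independent coordinates\<close>

lemma bij_betw_extend_inj_on:
  assumes K: "K \<subseteq> I" "finite I" and \<tau>: "inj_on \<tau> K" "\<tau> ` K \<subseteq> I"
  obtains \<sigma> where "bij_betw \<sigma> I I" "\<And>j. j \<in> K \<Longrightarrow> \<sigma> j = \<tau> j"
proof -
  have "finite K" using K finite_subset by blast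
  then have "card (I - K) = card (I - \<tau> ` K)"
    using K \<tau> by (simp add: card_Diff_subset card_image)
  then obtain \<beta> where \<beta>: "bij_betw \<beta> (I - K) (I - \<tau> ` K)"
    using finite_same_card_bij[of "I - K" "I - \<tau> ` K"] K by auto
  define \<sigma> where "\<sigma> x = (if x \<in> K then \<tau> x else \<beta> x)" for x
  have "bij_betw \<sigma> K (\<tau> ` K)"
    using \<tau> unfolding \<sigma>_def by (simp add: bij_betw_def inj_on_def)
  moreover have "bij_betw \<sigma> (I - K) (I - \<tau> ` K)"
    using \<beta> unfolding \<sigma>_def by (rule bij_betw_cong[THEN iffD1, rotated]) auto
  ultimately have "bij_betw \<sigma> (K \<union> (I - K)) (\<tau> ` K \<union> (I - \<tau> ` K))"
    by (rule bij_betw_combine) auto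
  moreover have "K \<union> (I - K) = I" "\<tau> ` K \<union> (I - \<tau> ` K) = I" using K \<tau> by auto
  ultimately have "bij_betw \<sigma> I I" by simp
  then show ?thesis by (rule that) (simp add: \<sigma>_def)
qed

lemma card_compose_le_eq:
  assumes \<sigma>: "bij_betw \<sigma> I I"
  shows "card {t \<in> I. p (\<sigma> t) \<le> x} = card {t \<in> I. p t \<le> x}"
proof -
  have "card {t \<in> I. p (\<sigma> t) \<le> x} = card (\<sigma> ` {t \<in> I. p (\<sigma> t) \<le> x})"
    using bij_betw_imp_inj_on[OF \<sigma>] by (intro card_image[symmetric]) (rule inj_on_subset, auto)
  also have "\<sigma> ` {t \<in> I. p (\<sigma> t) \<le> x} = {t \<in> I. p t \<le> x}"
  proof
    show "\<sigma> ` {t \<in> I. p (\<sigma> t) \<le> x} \<subseteq> {t \<in> I. p t \<le> x}"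
      using bij_betwE[OF \<sigma>] by auto
    show "{t \<in> I. p t \<le> x} \<subseteq> \<sigma> ` {t \<in> I. p (\<sigma> t) \<le> x}"
    proof
      fix u assume u: "u \<in> {t \<in> I. p t \<le> x}"
      then obtain t where "t \<in> I" "u = \<sigma> t" using bij_betw_imp_surj_on[OF \<sigma>] by blast
      then show "u \<in> \<sigma> ` {t \<in> I. p (\<sigma> t) \<le> x}" using u by blast
    qed
  qed
  finally show ?thesis .
qed

lemma compose_parking_function:
  assumes \<sigma>: "bij_betw \<sigma> {1..n} {1..n}" and p: "p \<in> parking_functions n"
  shows "compose {1..n} p \<sigma> \<in> parking_functions n"
proof -
  have "card {t \<in> {1..n}. compose {1..n} p \<sigma> t \<le> x} = card {t \<in> {1..n}. p t \<le> x}" for x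
  proof -
    have "{t \<in> {1..n}. compose {1..n} p \<sigma> t \<le> x} = {t \<in> {1..n}. p (\<sigma> t) \<le> x}"
      by (auto simp: compose_def)
    then show ?thesis using card_compose_le_eq[OF \<sigma>] by simp
  qed
  moreover have "compose {1..n} p \<sigma> \<in> PiE {1..n} (\<lambda>_. {1..n})"
    using parking_function_value[OF p] bij_betwE[OF \<sigma>] by (auto simp: compose_def PiE_iff)
  ultimately show ?thesis using p unfolding parking_functions_def by auto
qed

lemma inj_on_compose_parking_functions:
  assumes \<sigma>: "bij_betw \<sigma> {1..n} {1..n}"
  shows "inj_on (\<lambda>p. compose {1..n} p \<sigma>) (parking_functions n)"
proof (rule inj_onI)
  fix p q assume p: "p \<in> parking_functions n" and q: "q \<in> parking_functions n"
    and eq: "compose {1..n} p \<sigma> = compose {1..n} q \<sigma>"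
  have "p (\<sigma> t) = q (\<sigma> t)" if "t \<in> {1..n}" for t
    using fun_cong[OF eq, of t] that by (simp add: compose_def)
  moreover have "\<exists>t\<in>{1..n}. u = \<sigma> t" if "u \<in> {1..n}" for u
    using bij_betw_imp_surj_on[OF \<sigma>] that by blast
  ultimately have "p u = q u" if "u \<in> {1..n}" for u
    using that by blast
  then show "p = q"
    using parking_function_extensional[OF p] parking_function_extensional[OF q]
    by (intro extensionalityI) auto
qed

lemma card_parking_event_reindex:
  assumes K: "K \<subseteq> {1..n}" and \<tau>: "inj_on \<tau> K" "\<tau> ` K \<subseteq> {1..n}"
  shows "card {p \<in> parking_functions n. \<forall>j\<in>K. p (\<tau> j) \<le> i j}
           = card {p \<in> parking_functions n. \<forall>j\<in>K. p j \<le> i j}"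
proof -
  obtain \<sigma> where \<sigma>: "bij_betw \<sigma> {1..n} {1..n}" and \<sigma>\<tau>: "\<And>j. j \<in> K \<Longrightarrow> \<sigma> j = \<tau> j"
    using bij_betw_extend_inj_on[OF K _ \<tau>] by auto
  define \<sigma>' where "\<sigma>' = inv_into {1..n} \<sigma>"
  have \<sigma>': "bij_betw \<sigma>' {1..n} {1..n}" unfolding \<sigma>'_def by (rule bij_betw_inv_into[OF \<sigma>])
  have \<sigma>'\<sigma>: "\<sigma>' (\<sigma> j) = j" if "j \<in> {1..n}" for j
    unfolding \<sigma>'_def using \<sigma> that by (simp add: bij_betw_def)
  define A where "A = {p \<in> parking_functions n. \<forall>j\<in>K. p (\<tau> j) \<le> i j}"
  define B where "B = {p \<in> parking_functions n. \<forall>j\<in>K. p j \<le> i j}"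
  have "finite A" "finite B" unfolding A_def B_def using finite_parking_functions by auto
  have "card A \<le> card B"
  proof (rule card_inj_on_le[OF _ _ \<open>finite B\<close>])
    show "inj_on (\<lambda>p. compose {1..n} p \<sigma>) A"
      unfolding A_def by (rule inj_on_subset[OF inj_on_compose_parking_functions[OF \<sigma>]]) auto
    show "(\<lambda>p. compose {1..n} p \<sigma>) ` A \<subseteq> B"
      unfolding A_def B_def using compose_parking_function[OF \<sigma>] \<sigma>\<tau> K by (auto simp: compose_def)
  qed
  moreover have "card B \<le> card A"
  proof (rule card_inj_on_le[OF _ _ \<open>finite A\<close>])
    show "inj_on (\<lambda>p. compose {1..n} p \<sigma>') B"
      unfolding B_def by (rule inj_on_subset[OF inj_on_compose_parking_functions[OF \<sigma>']]) auto
    show "(\<lambda>p. compose {1..n} p \<sigma>') ` B \<subseteq> A"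
    proof (rule image_subsetI)
      fix p assume p: "p \<in> B"
      have "compose {1..n} p \<sigma>' (\<tau> j) \<le> i j" if j: "j \<in> K" for j
      proof -
        have "\<tau> j = \<sigma> j" "\<sigma> j \<in> {1..n}" "j \<in> {1..n}" using \<sigma>\<tau>[OF j] \<tau>(2) j K by auto
        then show ?thesis using p j \<sigma>'\<sigma>[of j] unfolding B_def compose_def by auto
      qed
      then show "compose {1..n} p \<sigma>' \<in> A"
        using p compose_parking_function[OF \<sigma>'] unfolding A_def B_def by auto
    qed
  qed
  ultimately show ?thesis unfolding A_def B_def by simp
qed

definition injections :: "nat \<Rightarrow> nat \<Rightarrow> (nat \<Rightarrow> nat) set" where
  "injections k n = {\<tau> \<in> PiE {1..k} (\<lambda>_. {1..n}). inj_on \<tau> {1..k}}"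

lemma finite_injections: "finite (injections k n)"
  unfolding injections_def by (rule finite_subset[OF _ finite_PiE[of "{1..k}" "\<lambda>_. {1..n}"]]) auto

lemma injections_nonempty: "k \<le> n \<Longrightarrow> injections k n \<noteq> {}"
  unfolding injections_def by (auto intro!: exI[where x="restrict id {1..k}"] simp: inj_on_def)

text \<open>Double counting of pairs \<open>(\<tau>, p)\<close>; by exchangeability every injective \<open>\<tau>\<close> sees the same
  number of parking functions.\<close>

lemma card_injections_mult_card_parking_event:
  assumes "k \<le> n"
  shows "card (injections k n) * card {p \<in> parking_functions n. \<forall>j\<in>{1..k}. p j \<le> i j}
           = (\<Sum>p\<in>parking_functions n. card {\<tau> \<in> injections k n. \<forall>j\<in>{1..k}. p (\<tau> j) \<le> i j})"
proof -
  have "(\<Sum>\<tau>\<in>injections k n. card {p \<in> parking_functions n. \<forall>j\<in>{1..k}. p (\<tau> j) \<le> i j})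
          = (\<Sum>\<tau>\<in>injections k n. card {p \<in> parking_functions n. \<forall>j\<in>{1..k}. p j \<le> i j})"
  proof (rule sum.cong[OF refl])
    fix \<tau> assume "\<tau> \<in> injections k n"
    then show "card {p \<in> parking_functions n. \<forall>j\<in>{1..k}. p (\<tau> j) \<le> i j}
                 = card {p \<in> parking_functions n. \<forall>j\<in>{1..k}. p j \<le> i j}"
      using assms by (intro card_parking_event_reindex) (auto simp: injections_def PiE_iff)
  qed
  then have "card (injections k n) * card {p \<in> parking_functions n. \<forall>j\<in>{1..k}. p j \<le> i j}
          = (\<Sum>\<tau>\<in>injections k n. card {p \<in> parking_functions n. \<forall>j\<in>{1..k}. p (\<tau> j) \<le> i j})"
    by simp
  also have "\<dots> = (\<Sum>\<tau>\<in>injections k n. \<Sum>p\<in>{p \<in> parking_functions n. \<forall>j\<in>{1..k}. p (\<tau> j) \<le> i j}. 1)"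
    by simp
  also have "\<dots> = (\<Sum>p\<in>parking_functions n. \<Sum>\<tau>\<in>{\<tau> \<in> injections k n. \<forall>j\<in>{1..k}. p (\<tau> j) \<le> i j}. 1)"
    by (rule sum.swap_restrict[OF finite_injections finite_parking_functions])
  also have "\<dots> = (\<Sum>p\<in>parking_functions n. card {\<tau> \<in> injections k n. \<forall>j\<in>{1..k}. p (\<tau> j) \<le> i j})"
    by simp
  finally show ?thesis .
qed

lemma card_PiE_coincide_le:
  assumes j: "j \<in> K" "j' \<in> K" "j \<noteq> j'" and K: "finite K" and I: "finite I"
  shows "card {\<tau> \<in> PiE K (\<lambda>_. I). \<tau> j = \<tau> j'} \<le> card I ^ (card K - 1)"
proof -
  have "card {\<tau> \<in> PiE K (\<lambda>_. I). \<tau> j = \<tau> j'} \<le> card (PiE (K - {j'}) (\<lambda>_. I))"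
  proof (rule card_inj_on_le)
    show "inj_on (\<lambda>\<tau>. restrict \<tau> (K - {j'})) {\<tau> \<in> PiE K (\<lambda>_. I). \<tau> j = \<tau> j'}"
    proof (rule inj_onI)
      fix x y
      assume x: "x \<in> {\<tau> \<in> PiE K (\<lambda>_. I). \<tau> j = \<tau> j'}" and y: "y \<in> {\<tau> \<in> PiE K (\<lambda>_. I). \<tau> j = \<tau> j'}"
        and eq: "restrict x (K - {j'}) = restrict y (K - {j'})"
      have "x u = y u" if "u \<in> K" for u
      proof (cases "u = j'")
        case True
        have "x j = y j" using fun_cong[OF eq, of j] j by auto
        then show ?thesis using x y True by auto
      next
        case False
        then show ?thesis using fun_cong[OF eq, of u] that by auto
      qed
      then show "x = y" using x y by (intro extensionalityI[of _ K]) (auto simp: PiE_iff)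
    qed
    show "(\<lambda>\<tau>. restrict \<tau> (K - {j'})) ` {\<tau> \<in> PiE K (\<lambda>_. I). \<tau> j = \<tau> j'} \<subseteq> PiE (K - {j'}) (\<lambda>_. I)"
    proof
      fix z assume "z \<in> (\<lambda>\<tau>. restrict \<tau> (K - {j'})) ` {\<tau> \<in> PiE K (\<lambda>_. I). \<tau> j = \<tau> j'}"
      then obtain x where "x \<in> PiE K (\<lambda>_. I)" "z = restrict x (K - {j'})" by auto
      then show "z \<in> PiE (K - {j'}) (\<lambda>_. I)" by (auto simp: restrict_PiE_iff PiE_iff)
    qed
    show "finite (PiE (K - {j'}) (\<lambda>_. I))" using I K by (intro finite_PiE) auto
  qed
  also have "\<dots> = card I ^ (card K - 1)" using K j by (simp add: card_PiE)
  finally show ?thesis .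
qed

lemma card_non_injections_le:
  "card (PiE {1..k} (\<lambda>_. {1..n}) - injections k n) \<le> k * (k - 1) * n ^ (k - 1)"
proof -
  define K where "K = {1..k}"
  define T where "T = PiE K (\<lambda>_. {1..n})"
  define P where "P = Sigma K (\<lambda>j. K - {j})"
  define D where "D x = {\<tau> \<in> T. \<tau> (fst x) = \<tau> (snd x)}" for x
  have "T - injections k n \<subseteq> (\<Union>x\<in>P. D x)"
    unfolding injections_def T_def P_def D_def K_def inj_on_def by force
  moreover have "finite P" unfolding P_def K_def by auto
  ultimately have "card (T - injections k n) \<le> card (\<Union>x\<in>P. D x)"
    unfolding T_def D_def K_def by (intro card_mono) (auto intro!: finite_PiE)
  also have "\<dots> \<le> (\<Sum>x\<in>P. card (D x))"
    by (rule card_UN_le[OF \<open>finite P\<close>])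
  also have "\<dots> \<le> (\<Sum>x\<in>P. n ^ (k - 1))"
  proof (rule sum_mono)
    fix x assume "x \<in> P"
    then have "fst x \<in> K" "snd x \<in> K" "fst x \<noteq> snd x" unfolding P_def by auto
    from card_PiE_coincide_le[OF this, of "{1..n}"] show "card (D x) \<le> n ^ (k - 1)"
      unfolding D_def T_def K_def by simp
  qed
  also have "\<dots> = k * (k - 1) * n ^ (k - 1)"
    unfolding P_def K_def by (simp add: card_Diff_subset)
  finally show ?thesis unfolding T_def K_def .
qed

lemma card_PiE_below_eq_prod:
  fixes k n :: nat
  shows "card {\<tau> \<in> PiE {1..k} (\<lambda>_. {1..n}). \<forall>j\<in>{1..k}. p (\<tau> j) \<le> i j}
     = (\<Prod>j\<in>{1..k}. card {t \<in> {1..n}. p t \<le> i j})"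
proof -
  have "{\<tau> \<in> PiE {1..k} (\<lambda>_. {1..n}). \<forall>j\<in>{1..k}. p (\<tau> j) \<le> i j}
          = PiE {1..k} (\<lambda>j. {t \<in> {1..n}. p t \<le> i j})"
    by (auto simp: PiE_iff extensional_def)
  then show ?thesis by (simp add: card_PiE)
qed

lemma abs_prod_diff_le_sum:
  fixes u v :: "'a \<Rightarrow> real"
  assumes "finite K" "\<And>j. j \<in> K \<Longrightarrow> 0 \<le> u j \<and> u j \<le> 1" "\<And>j. j \<in> K \<Longrightarrow> 0 \<le> v j \<and> v j \<le> 1"
  shows "\<bar>(\<Prod>j\<in>K. u j) - (\<Prod>j\<in>K. v j)\<bar> \<le> (\<Sum>j\<in>K. \<bar>u j - v j\<bar>)"
  using assms
proof (induction K rule: finite_induct)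
  case empty
  then show ?case by simp
next
  case (insert x F)
  have vx: "0 \<le> v x" "v x \<le> 1" using insert.prems by auto
  have pu: "0 \<le> (\<Prod>j\<in>F. u j)" "(\<Prod>j\<in>F. u j) \<le> 1"
    using insert.prems by (auto intro!: prod_nonneg prod_le_1)
  have IH: "\<bar>(\<Prod>j\<in>F. u j) - (\<Prod>j\<in>F. v j)\<bar> \<le> (\<Sum>j\<in>F. \<bar>u j - v j\<bar>)"
    using insert by auto
  have "\<bar>u x * (\<Prod>j\<in>F. u j) - v x * (\<Prod>j\<in>F. v j)\<bar>
          = \<bar>(u x - v x) * (\<Prod>j\<in>F. u j) + v x * ((\<Prod>j\<in>F. u j) - (\<Prod>j\<in>F. v j))\<bar>"
    by (simp add: algebra_simps)
  also have "\<dots> \<le> \<bar>u x - v x\<bar> * (\<Prod>j\<in>F. u j) + v x * \<bar>(\<Prod>j\<in>F. u j) - (\<Prod>j\<in>F. v j)\<bar>"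
    using pu vx by (auto intro!: order.trans[OF abs_triangle_ineq] simp: abs_mult)
  also have "\<dots> \<le> \<bar>u x - v x\<bar> * 1 + 1 * (\<Sum>j\<in>F. \<bar>u j - v j\<bar>)"
    using pu vx IH by (intro add_mono mult_mono) auto
  finally show ?case using insert by simp
qed

lemma abs_card_ratio_diff_le:
  assumes T: "finite T" and I: "I \<subseteq> T" "I \<noteq> {}"
  shows "\<bar>real (card (A \<inter> I)) / real (card I) - real (card (A \<inter> T)) / real (card T)\<bar>
           \<le> real (card (T - I)) / real (card T)"
proof -
  define a b d N where "a = real (card (A \<inter> I))" and "b = real (card (A \<inter> T))"
    and "d = real (card (T - I))" and "N = real (card T)"
  have finI: "finite I" using T I finite_subset by blast
  have I_pos: "real (card I) > 0" using finI I by (simp add: card_gt_0_iff)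
  have N_eq: "N = real (card I) + d"
    unfolding N_def d_def using T I card_Diff_subset[OF finI I(1)] card_mono[OF T I(1)] by simp
  have "a \<le> b" unfolding a_def b_def using T I by (intro of_nat_mono card_mono) auto
  have "a \<le> real (card I)" unfolding a_def using finI by (intro of_nat_mono card_mono) auto
  have "A \<inter> T \<subseteq> (A \<inter> I) \<union> (T - I)" by auto
  then have "card (A \<inter> T) \<le> card (A \<inter> I) + card (T - I)"
    using T finI by (meson card_Un_le card_mono finite_Diff finite_Int finite_UnI order.trans)
  then have "b \<le> a + d" unfolding a_def b_def d_def by simp
  have "0 \<le> a" "0 \<le> d" unfolding a_def d_def by simp_all
  have "a / real (card I) - b / N \<le> d / N"
  proof -
    have "a / real (card I) - b / N \<le> a / real (card I) - a / N"
      using \<open>a \<le> b\<close> I_pos N_eq \<open>0 \<le> d\<close> by (intro diff_left_mono divide_right_mono) auto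
    also have "\<dots> = a / real (card I) * (d / N)"
      using I_pos \<open>0 \<le> d\<close> unfolding N_eq by (simp add: field_simps)
    also have "\<dots> \<le> 1 * (d / N)"
      using \<open>a \<le> real (card I)\<close> \<open>0 \<le> d\<close> I_pos N_eq by (intro mult_right_mono) auto
    finally show ?thesis by simp
  qed
  moreover have "b / N - a / real (card I) \<le> d / N"
  proof -
    have "a / N \<le> a / real (card I)"
      using \<open>0 \<le> a\<close> I_pos N_eq \<open>0 \<le> d\<close> by (intro divide_left_mono) auto
    moreover have "b / N \<le> (a + d) / N" using \<open>b \<le> a + d\<close> I_pos N_eq \<open>0 \<le> d\<close> by (intro divide_right_mono) auto
    ultimately show ?thesis by (simp add: add_divide_distrib)
  qed
  ultimately show ?thesis unfolding a_def b_def d_def N_def by linarith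
qed

lemma unif_prob_all_functions:
  assumes i: "i \<in> PiE {1..k} (\<lambda>_. {1..n})" and kn: "k \<le> n"
  shows "unif_prob (all_functions n) (\<lambda>f. \<forall>j\<in>{1..k}. f j \<le> i j) = (\<Prod>j\<in>{1..k}. real (i j) / real n)"
proof -
  define S where "S t = (if t \<in> {1..k} then {1..i t} else {1..n})" for t
  have i_le: "i t \<le> n" if "t \<in> {1..k}" for t using i that by (auto simp: PiE_iff)
  have "{f \<in> all_functions n. \<forall>j\<in>{1..k}. f j \<le> i j} = PiE {1..n} S"
  proof
    show "{f \<in> all_functions n. \<forall>j\<in>{1..k}. f j \<le> i j} \<subseteq> PiE {1..n} S"
      using kn unfolding all_functions_def S_def by (auto simp: PiE_iff extensional_def)
    show "PiE {1..n} S \<subseteq> {f \<in> all_functions n. \<forall>j\<in>{1..k}. f j \<le> i j}"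
    proof
      fix f assume f: "f \<in> PiE {1..n} S"
      have "f t \<in> S t" if "t \<in> {1..n}" for t using f that by (auto simp: PiE_iff)
      then have "f t \<in> {1..n}" if "t \<in> {1..n}" for t
        using that i_le unfolding S_def by (cases "t \<in> {1..k}") fastforce+
      moreover have "f j \<le> i j" if "j \<in> {1..k}" for j
        using \<open>\<And>t. t \<in> {1..n} \<Longrightarrow> f t \<in> S t\<close>[of j] that kn unfolding S_def by auto
      ultimately show "f \<in> {f \<in> all_functions n. \<forall>j\<in>{1..k}. f j \<le> i j}"
        using f unfolding all_functions_def by (auto simp: PiE_iff)
    qed
  qed
  then have "card {f \<in> all_functions n. \<forall>j\<in>{1..k}. f j \<le> i j} = (\<Prod>t\<in>{1..n}. card (S t))"
    by (simp add: card_PiE)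
  also have "\<dots> = (\<Prod>t\<in>{1..k}. card (S t)) * (\<Prod>t\<in>{1..n} - {1..k}. card (S t))"
    using kn by (subst prod.subset_diff[of "{1..k}" "{1..n}"]) (auto simp: mult.commute)
  also have "\<dots> = (\<Prod>t\<in>{1..k}. i t) * n ^ (n - k)"
    using kn unfolding S_def by (simp add: card_Diff_subset)
  finally have "real (card {f \<in> all_functions n. \<forall>j\<in>{1..k}. f j \<le> i j}) = (\<Prod>t\<in>{1..k}. real (i t)) * real n ^ (n - k)"
    by simp
  moreover have "real (card (all_functions n)) = real n ^ k * real n ^ (n - k)"
    unfolding all_functions_def using kn by (simp add: card_PiE flip: power_add)
  ultimately have "unif_prob (all_functions n) (\<lambda>f. \<forall>j\<in>{1..k}. f j \<le> i j) = (\<Prod>t\<in>{1..k}. real (i t)) / real n ^ k"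
    unfolding unif_prob_def using kn by (cases "n = 0") simp_all
  also have "\<dots> = (\<Prod>j\<in>{1..k}. real (i j) / real n)" by (simp add: prod_dividef)
  finally show ?thesis .
qed

lemma parking_product_fraction_close:
  fixes k n :: nat
  assumes p: "p \<in> parking_functions n" and i: "i \<in> PiE {1..k} (\<lambda>_. {1..n})"
  shows "\<bar>real (card {\<tau> \<in> PiE {1..k} (\<lambda>_. {1..n}). \<forall>j\<in>{1..k}. p (\<tau> j) \<le> i j}) / real n ^ k
            - (\<Prod>j\<in>{1..k}. real (i j) / real n)\<bar>
         \<le> real k * shift_discrepancy n p / real n"
proof -
  define u where "u j = real (card {t \<in> {1..n}. p t \<le> i j}) / real n" for j
  have "real (card {\<tau> \<in> PiE {1..k} (\<lambda>_. {1..n}). \<forall>j\<in>{1..k}. p (\<tau> j) \<le> i j}) / real n ^ k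
          = (\<Prod>j\<in>{1..k}. u j)"
    unfolding card_PiE_below_eq_prod u_def by (simp add: prod_dividef)
  moreover have "0 \<le> u j \<and> u j \<le> 1" for j
  proof -
    have "card {t \<in> {1..n}. p t \<le> i j} \<le> card {1..n}" by (intro card_mono) auto
    then show ?thesis unfolding u_def by (auto simp: divide_le_eq_1)
  qed
  moreover have ij: "i j \<in> {1..n}" if "j \<in> {1..k}" for j using i that by (auto simp: PiE_iff)
  then have "0 \<le> real (i j) / real n \<and> real (i j) / real n \<le> 1" if "j \<in> {1..k}" for j
    using that by (auto simp: divide_le_eq_1)
  ultimately have "\<bar>real (card {\<tau> \<in> PiE {1..k} (\<lambda>_. {1..n}). \<forall>j\<in>{1..k}. p (\<tau> j) \<le> i j}) / real n ^ k
            - (\<Prod>j\<in>{1..k}. real (i j) / real n)\<bar> \<le> (\<Sum>j\<in>{1..k}. \<bar>u j - real (i j) / real n\<bar>)"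
    by (auto intro!: abs_prod_diff_le_sum)
  also have "\<dots> \<le> (\<Sum>j\<in>{1..k}. shift_discrepancy n p / real n)"
  proof (rule sum_mono)
    fix j assume j: "j \<in> {1..k}"
    have "i j \<le> card {t \<in> {1..n}. p t \<le> i j}" using parking_function_count_ge[OF p ij[OF j]] .
    moreover have "real (card {t \<in> {1..n}. p t \<le> i j}) - real (i j) \<le> shift_discrepancy n p"
      using parking_excess_le_shift_discrepancy[OF p ij[OF j]] .
    ultimately have "\<bar>real (card {t \<in> {1..n}. p t \<le> i j}) - real (i j)\<bar> / real n \<le> shift_discrepancy n p / real n"
      by (intro divide_right_mono) auto
    then show "\<bar>u j - real (i j) / real n\<bar> \<le> shift_discrepancy n p / real n"
      unfolding u_def by (simp add: diff_divide_distrib[symmetric] abs_divide)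
  qed
  also have "\<dots> = real k * shift_discrepancy n p / real n" by simp
  finally show ?thesis .
qed

lemma non_injections_fraction_le:
  assumes "0 < n"
  shows "real (card (PiE {1..k} (\<lambda>_. {1..n}) - injections k n)) / real (card (PiE {1..k} (\<lambda>_. {1..n::nat})))
           \<le> real k * (real k - 1) / real n"
proof (cases "k = 0")
  case True
  then show ?thesis using card_non_injections_le[of k n] by simp
next
  case False
  define N where "N = real n ^ (k - 1)"
  have N: "N > 0" unfolding N_def using assms by simp
  have "real (card (PiE {1..k} (\<lambda>_. {1..n}) - injections k n)) \<le> real (k * (k - 1) * n ^ (k - 1))"
    by (simp only: of_nat_le_iff card_non_injections_le)
  also have "\<dots> = real k * (real k - 1) * N" unfolding N_def using False by (simp add: of_nat_diff)
  finally have "real (card (PiE {1..k} (\<lambda>_. {1..n}) - injections k n)) / (real n * N)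
                  \<le> real k * (real k - 1) * N / (real n * N)"
    using N assms by (intro divide_right_mono) auto
  also have "\<dots> = real k * (real k - 1) / real n" using N by simp
  also have "real n * N = real (card (PiE {1..k} (\<lambda>_. {1..n::nat})))"
    unfolding N_def using False by (cases k) (simp_all add: card_PiE)
  finally show ?thesis .
qed

lemma parking_injective_fraction_close:
  assumes p: "p \<in> parking_functions n" and i: "i \<in> PiE {1..k} (\<lambda>_. {1..n})" and "k \<le> n" "0 < n"
  shows "\<bar>real (card {\<tau> \<in> injections k n. \<forall>j\<in>{1..k}. p (\<tau> j) \<le> i j}) / real (card (injections k n))
            - (\<Prod>j\<in>{1..k}. real (i j) / real n)\<bar>
         \<le> real k * (real k - 1) / real n + real k * shift_discrepancy n p / real n"
proof -
  define T where "T = PiE {1..k} (\<lambda>_. {1..n})"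
  define A where "A = {\<tau>. \<forall>j\<in>{1..k}. p (\<tau> j) \<le> i j}"
  have T: "finite T" "injections k n \<subseteq> T" "card T = n ^ k"
    unfolding T_def injections_def by (auto simp: card_PiE intro!: finite_PiE)
  have "\<bar>real (card (A \<inter> injections k n)) / real (card (injections k n)) - real (card (A \<inter> T)) / real (card T)\<bar>
          \<le> real (card (T - injections k n)) / real (card T)"
    by (rule abs_card_ratio_diff_le[OF T(1,2) injections_nonempty[OF \<open>k \<le> n\<close>]])
  also have "\<dots> \<le> real k * (real k - 1) / real n"
    unfolding T_def by (rule non_injections_fraction_le[OF \<open>0 < n\<close>])
  finally have "\<bar>real (card (A \<inter> injections k n)) / real (card (injections k n)) - real (card (A \<inter> T)) / real n ^ k\<bar>
          \<le> real k * (real k - 1) / real n"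
    unfolding T(3) by simp
  moreover have "A \<inter> injections k n = {\<tau> \<in> injections k n. \<forall>j\<in>{1..k}. p (\<tau> j) \<le> i j}"
    "A \<inter> T = {\<tau> \<in> PiE {1..k} (\<lambda>_. {1..n}). \<forall>j\<in>{1..k}. p (\<tau> j) \<le> i j}"
    unfolding A_def T_def by auto
  ultimately have "\<bar>real (card {\<tau> \<in> injections k n. \<forall>j\<in>{1..k}. p (\<tau> j) \<le> i j}) / real (card (injections k n))
      - real (card {\<tau> \<in> PiE {1..k} (\<lambda>_. {1..n}). \<forall>j\<in>{1..k}. p (\<tau> j) \<le> i j}) / real n ^ k\<bar>
      \<le> real k * (real k - 1) / real n"
    by simp
  then show ?thesis using parking_product_fraction_close[OF p i] by linarith
qed

lemma unif_prob_parking_event: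
  assumes "k \<le> n"
  shows "unif_prob (parking_functions n) (\<lambda>p. \<forall>j\<in>{1..k}. p j \<le> i j)
           = (\<Sum>p\<in>parking_functions n. real (card {\<tau> \<in> injections k n. \<forall>j\<in>{1..k}. p (\<tau> j) \<le> i j})
                / real (card (injections k n))) / real (card (parking_functions n))"
proof -
  define I where "I = real (card (injections k n))"
  have "I > 0"
    unfolding I_def using injections_nonempty[OF assms] finite_injections by (simp add: card_gt_0_iff)
  have "real (card (injections k n) * card {p \<in> parking_functions n. \<forall>j\<in>{1..k}. p j \<le> i j})
          = real (\<Sum>p\<in>parking_functions n. card {\<tau> \<in> injections k n. \<forall>j\<in>{1..k}. p (\<tau> j) \<le> i j})"
    using card_injections_mult_card_parking_event[OF assms, of i] by (rule arg_cong)
  then have "(\<Sum>p\<in>parking_functions n. real (card {\<tau> \<in> injections k n. \<forall>j\<in>{1..k}. p (\<tau> j) \<le> i j}))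
          = I * real (card {p \<in> parking_functions n. \<forall>j\<in>{1..k}. p j \<le> i j})"
    unfolding I_def of_nat_mult of_nat_sum by simp
  then have "(\<Sum>p\<in>parking_functions n. real (card {\<tau> \<in> injections k n. \<forall>j\<in>{1..k}. p (\<tau> j) \<le> i j}) / I)
               = real (card {p \<in> parking_functions n. \<forall>j\<in>{1..k}. p j \<le> i j})"
    using \<open>I > 0\<close> by (simp add: sum_divide_distrib[symmetric])
  then show ?thesis unfolding unif_prob_def I_def by simp
qed

lemma parking_event_prob_close_to_product:
  assumes n: "n \<ge> 2" and kn: "k \<le> n" and i: "i \<in> PiE {1..k} (\<lambda>_. {1..n})"
  shows "\<bar>unif_prob (parking_functions n) (\<lambda>p. \<forall>j\<in>{1..k}. p j \<le> i j) - (\<Prod>j\<in>{1..k}. real (i j) / real n)\<bar>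
         \<le> real k * (real k - 1) / real n + 3/2 * real k * sqrt (ln (real n) / real n)"
proof -
  define PF where "PF = parking_functions n"
  define f where "f p = real (card {\<tau> \<in> injections k n. \<forall>j\<in>{1..k}. p (\<tau> j) \<le> i j}) / real (card (injections k n))" for p
  define P where "P = (\<Prod>j\<in>{1..k}. real (i j) / real n)"
  have PF: "real (card PF) > 0"
    unfolding PF_def using finite_parking_functions parking_functions_nonempty by (simp add: card_gt_0_iff)
  have "\<bar>unif_prob PF (\<lambda>p. \<forall>j\<in>{1..k}. p j \<le> i j) - P\<bar> = \<bar>\<Sum>p\<in>PF. f p - P\<bar> / real (card PF)"
    using PF unfolding unif_prob_parking_event[OF kn] PF_def f_def
    by (simp add: sum_subtractf abs_divide field_simps)
  also have "\<dots> \<le> (\<Sum>p\<in>PF. \<bar>f p - P\<bar>) / real (card PF)"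
    using PF by (intro divide_right_mono sum_abs) auto
  also have "\<dots> \<le> (\<Sum>p\<in>PF. real k * (real k - 1) / real n + real k * shift_discrepancy n p / real n) / real (card PF)"
    using PF n kn i parking_injective_fraction_close
    unfolding PF_def f_def P_def by (intro divide_right_mono sum_mono) auto
  also have "\<dots> = real k * (real k - 1) / real n
                    + real k / real n * ((\<Sum>p\<in>PF. shift_discrepancy n p) / real (card PF))"
    using PF by (simp add: sum.distrib sum_distrib_left[symmetric] sum_divide_distrib[symmetric] field_simps)
  also have "\<dots> \<le> real k * (real k - 1) / real n + real k / real n * (3/2 * sqrt (real n * ln (real n)))"
    using mean_shift_discrepancy_le[OF n] unfolding PF_def by (intro add_left_mono mult_left_mono) auto
  also have "real k / real n * (3/2 * sqrt (real n * ln (real n))) = 3/2 * real k * sqrt (ln (real n) / real n)"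
    using n by (simp add: real_sqrt_mult real_sqrt_divide field_simps)
  finally show ?thesis unfolding PF_def P_def .
qed

theorem theorem3:
  fixes n k :: nat
  assumes "n \<ge> 4" and "1 \<le> k" and "k \<le> n"
  shows "(SUP i \<in> PiE {1..k} (\<lambda>_. {1..n}).
            \<bar>unif_prob (parking_functions n) (\<lambda>p. \<forall>j\<in>{1..k}. p j \<le> i j)
             - unif_prob (all_functions n) (\<lambda>f. \<forall>j\<in>{1..k}. f j \<le> i j)\<bar>)
         \<le> 2 * real k * sqrt (ln (real n) / real n) + real k * (real k - 1) / real n"
proof (rule cSUP_least)
  show "PiE {1..k} (\<lambda>_. {1..n}) \<noteq> {}" using assms by (auto simp: PiE_eq_empty_iff)
next
  fix i assume i: "i \<in> PiE {1..k} (\<lambda>_. {1..n})"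
  have "\<bar>unif_prob (parking_functions n) (\<lambda>p. \<forall>j\<in>{1..k}. p j \<le> i j)
          - unif_prob (all_functions n) (\<lambda>f. \<forall>j\<in>{1..k}. f j \<le> i j)\<bar>
        \<le> real k * (real k - 1) / real n + 3/2 * real k * sqrt (ln (real n) / real n)"
    using parking_event_prob_close_to_product[OF _ assms(3) i] unif_prob_all_functions[OF i assms(3)]
      assms(1) by simp
  moreover have "0 \<le> real k * sqrt (ln (real n) / real n)" using assms(1) by simp
  ultimately show "\<bar>unif_prob (parking_functions n) (\<lambda>p. \<forall>j\<in>{1..k}. p j \<le> i j)
                     - unif_prob (all_functions n) (\<lambda>f. \<forall>j\<in>{1..k}. f j \<le> i j)\<bar>
                   \<le> 2 * real k * sqrt (ln (real n) / real n) + real k * (real k - 1) / real n"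
    by linarith
qed

end
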